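(* Let $\alpha>0$, let $X_{0-}$ be a real-valued random variable and let $Z$ be a continuous stochastic process with $Z_0=0$, independent of $X_{0-}$, satisfying the crossing property (see context). For $\ell\in M$ define $X_t[\ell]=X_{0-}+Z_t-\alpha\ell_t$, $\tau[\ell]=\inf\{t\ge0:X_t[\ell]\le0\}$ and $\Gamma[\ell]_t=\mathbb{P}(\tau[\ell]\le t)$. Then the operator $\Gamma:M\to M$ is continuous.
   Context: Crossing property: for every stopping time $\tau$ with respect to the natural filtration of $X_{0-}+Z$ and every $h>0$, $\mathbb{P}(\tau<\infty,\ \inf_{0\le s\le h}(Z_{\tau+s}-Z_\tau)=0)=0$. $M$ is the set of càdlàg increasing functions $\ell:\overline{\mathbb{R}}\to[0,1]$ ($\overline{\mathbb{R}}$ the two-point compactification of $\mathbb{R}$) with $\ell_{0-}=0$ and $\ell_\infty=1$, with the topology: $\ell^n\to\ell$ iff $\ell^n_t\to\ell_t$ for all $t\in[0,\infty]$ at which $\ell$ is continuous. *)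

theory Defs
  imports "HOL-Probability.Probability"
begin

definition Mset :: "(ereal \<Rightarrow> real) set" where
  "Mset = {l. mono l \<and> (\<forall>t. 0 \<le> l t \<and> l t \<le> 1)
            \<and> (\<forall>t. continuous (at_right t) l)
            \<and> (\<forall>t. \<exists>L. (l \<longlongrightarrow> L) (at_left t))
            \<and> (l \<longlongrightarrow> 0) (at_left 0)
            \<and> l \<infinity> = 1}"

definition Mconv :: "(nat \<Rightarrow> ereal \<Rightarrow> real) \<Rightarrow> (ereal \<Rightarrow> real) \<Rightarrow> bool" where
  "Mconv ls l \<longleftrightarrow> (\<forall>t. 0 \<le> t \<longrightarrow> isCont l t \<longrightarrow> (\<lambda>n. ls n t) \<longlonglongrightarrow> l t)"

definition nat_filt :: "'w measure \<Rightarrow> (real \<Rightarrow> 'w \<Rightarrow> real) \<Rightarrow> real \<Rightarrow> 'w measure" where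
  "nat_filt P Y t = sigma (space P)
     {Y s -` B \<inter> space P | s B. 0 \<le> s \<and> s \<le> t \<and> B \<in> sets borel}"

definition is_stopping_time :: "'w measure \<Rightarrow> (real \<Rightarrow> 'w \<Rightarrow> real) \<Rightarrow> ('w \<Rightarrow> ereal) \<Rightarrow> bool" where
  "is_stopping_time P Y T \<longleftrightarrow> (\<forall>\<omega>\<in>space P. 0 \<le> T \<omega>) \<and>
     (\<forall>t::real. 0 \<le> t \<longrightarrow> {\<omega> \<in> space P. T \<omega> \<le> ereal t} \<in> sets (nat_filt P Y t))"

definition crossing_property :: "'w measure \<Rightarrow> ('w \<Rightarrow> real) \<Rightarrow> (real \<Rightarrow> 'w \<Rightarrow> real) \<Rightarrow> bool" where
  "crossing_property P X0 Z \<longleftrightarrow>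
     (\<forall>T h. is_stopping_time P (\<lambda>t \<omega>. X0 \<omega> + Z t \<omega>) T \<and> 0 < h \<longrightarrow>
        measure P {\<omega> \<in> space P. T \<omega> < \<infinity> \<and>
          (INF s\<in>{0..h}. Z (real_of_ereal (T \<omega>) + s) \<omega> - Z (real_of_ereal (T \<omega>)) \<omega>) = 0} = 0)"


definition tau :: "('w \<Rightarrow> real) \<Rightarrow> (real \<Rightarrow> 'w \<Rightarrow> real) \<Rightarrow> real \<Rightarrow> (ereal \<Rightarrow> real) \<Rightarrow> 'w \<Rightarrow> ereal" where
  "tau X0 Z \<alpha> l \<omega> = Inf {ereal t | t. 0 \<le> t \<and> X0 \<omega> + Z t \<omega> - \<alpha> * l (ereal t) \<le> 0}"

definition Gamma :: "'w measure \<Rightarrow> ('w \<Rightarrow> real) \<Rightarrow> (real \<Rightarrow> 'w \<Rightarrow> real) \<Rightarrow> real \<Rightarrow> (ereal \<Rightarrow> real) \<Rightarrow> ereal \<Rightarrow> real" where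
  "Gamma P X0 Z \<alpha> l t = measure P {\<omega> \<in> space P. tau X0 Z \<alpha> l \<omega> \<le> t}"

end

theory Submission
  imports Defs
begin

(* Along a fixed path y = X0 + Z, the hitting time tau[l] depends on l only through the sign of
   X_t[l] = y t - alpha l_t. If l^n -> l in M, any limit of times at which X[l^n] is (nearly)
   nonpositive is a time at which X[l] is nonpositive, since l is monotone, right-continuous and
   its continuity points are dense; hence tau[l^n] > t eventually whenever tau[l] > t.
   Conversely, if the path drops strictly below its value immediately after tau[l] < t, then
   X[l] is strictly negative at some continuity point c < t of l, a strict inequality that
   survives the passage to l^n, so tau[l^n] <= t eventually. The crossing property says that
   such a drop happens almost surely, and at a continuity point t of Gamma[l] the event
   tau[l] = t is null. So the indicators of {tau[l^n] <= t} converge almost surely, and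
   dominated convergence gives Gamma[l^n]_t -> Gamma[l]_t. Path continuity reduces
   {tau[l] <= t} to countably many times, which makes tau[l] a stopping time; that Gamma[l]
   lies in M is the usual regularity of a distribution function. *)

section \<open>The space M\<close>

lemma MsetD:
  assumes "l \<in> Mset"
  shows "mono l" "0 \<le> l t" "l t \<le> 1" "continuous (at_right t) l" "l \<infinity> = 1"
  using assms unfolding Mset_def by auto

lemma Mset_tendsto_at_right_real:
  assumes "l \<in> Mset"
  shows "((\<lambda>v. l (ereal v)) \<longlongrightarrow> l (ereal u)) (at_right u)"
proof -
  have "(l \<longlongrightarrow> l (ereal u)) (at_right (ereal u))"
    using MsetD(4)[OF assms, of "ereal u"] by (simp add: continuous_within)
  then show ?thesis by (simp add: at_right_ereal filterlim_filtermap)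
qed

lemma Mset_isCont_between:
  assumes "l \<in> Mset" "a < b"
  obtains c where "a < c" "c < b" "isCont l (ereal c)"
proof -
  have "mono (l \<circ> ereal)"
    using MsetD(1)[OF assms(1)] by (auto simp: mono_def)
  then have "countable {c. \<not> isCont (l \<circ> ereal) c}"
    by (rule mono_ctble_discont)
  from open_minus_countable[OF this, of "{a<..<b}"] assms(2)
  obtain c where "a < c" "c < b" "isCont (l \<circ> ereal) c" by auto
  moreover from this(3) have "(l \<longlongrightarrow> l (ereal c)) (at (ereal c))"
    by (simp add: isCont_def at_ereal filterlim_filtermap o_def)
  ultimately show ?thesis
    using that by (simp add: isCont_def)
qed

lemma Mconv_const: "Mconv (\<lambda>_. l) l"
  by (simp add: Mconv_def)

lemma Mconv_compose:
  assumes "Mconv L l" "filterlim g sequentially sequentially"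
  shows "Mconv (\<lambda>j. L (g j)) l"
  using assms unfolding Mconv_def by (auto intro: filterlim_compose[of "\<lambda>n. L n _"])

section \<open>Hitting times of deterministic paths\<close>

(* Xpath alpha y l is the paper's X[l] along the path y = X0 + Z. *)
abbreviation Xpath :: "real \<Rightarrow> (real \<Rightarrow> real) \<Rightarrow> (ereal \<Rightarrow> real) \<Rightarrow> real \<Rightarrow> real" where
  "Xpath \<alpha> y l t \<equiv> y t - \<alpha> * l (ereal t)"

definition hit :: "real \<Rightarrow> (real \<Rightarrow> real) \<Rightarrow> (ereal \<Rightarrow> real) \<Rightarrow> ereal" where
  "hit \<alpha> y l = Inf {ereal t | t. 0 \<le> t \<and> Xpath \<alpha> y l t \<le> 0}"

lemma tau_eq_hit: "tau X0 Z \<alpha> l \<omega> = hit \<alpha> (\<lambda>t. X0 \<omega> + Z t \<omega>) l"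
  by (simp add: tau_def hit_def)

lemma hit_nonneg: "0 \<le> hit \<alpha> y l"
  by (auto simp: hit_def intro!: Inf_greatest)

lemma tau_nonneg: "0 \<le> tau X0 Z \<alpha> l \<omega>"
  by (simp add: tau_eq_hit hit_nonneg)

lemma Xpath_tendsto_at_right:
  assumes "l \<in> Mset" "continuous_on {0..} y" "0 \<le> r"
  shows "((\<lambda>v. Xpath \<alpha> y l v) \<longlongrightarrow> Xpath \<alpha> y l r) (at_right r)"
proof -
  have "(y \<longlongrightarrow> y r) (at r within {0..})"
    using assms(2,3) by (simp add: continuous_on_def)
  then have "(y \<longlongrightarrow> y r) (at_right r)"
    by (rule tendsto_mono[rotated]) (use assms(3) in \<open>auto intro: at_le\<close>)
  then show ?thesis
    using Mset_tendsto_at_right_real[OF assms(1)] by (intro tendsto_intros)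
qed

(* Take a continuity point c of l just right of x: monotonicity gives L j (u j) <= L j c, the
   convergence in M gives L j c -> l c, and right-continuity makes l c close to l x. *)
lemma Xpath_limit_nonpos:
  assumes \<alpha>: "\<alpha> > 0" and l: "l \<in> Mset" and L: "\<And>j. L j \<in> Mset" and conv: "Mconv L l"
    and y: "continuous_on {0..} y"
    and u: "\<And>j. 0 \<le> u j" "u \<longlonglongrightarrow> x" and e: "e \<longlonglongrightarrow> 0"
    and le: "\<And>j. Xpath \<alpha> y (L j) (u j) \<le> e j"
  shows "Xpath \<alpha> y l x \<le> 0"
proof (rule field_le_epsilon)
  fix \<epsilon> :: real assume "0 < \<epsilon>"
  define \<eta> where "\<eta> = \<epsilon> / (6 * \<alpha>)"
  have \<eta>: "\<eta> > 0" "2 * \<alpha> * \<eta> = \<epsilon> / 3" using \<alpha> \<open>0 < \<epsilon>\<close> by (auto simp: \<eta>_def)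
  have x: "0 \<le> x" using LIMSEQ_le_const[OF u(2)] u(1) by auto
  have "\<forall>\<^sub>F v in at_right x. l (ereal v) < l (ereal x) + \<eta>"
    using Mset_tendsto_at_right_real[OF l] \<eta>(1) by (intro order_tendstoD) auto
  then obtain b where "b > x" and b: "\<And>v. x < v \<Longrightarrow> v < b \<Longrightarrow> l (ereal v) < l (ereal x) + \<eta>"
    using eventually_at_right[of x "x + 1"] by auto
  then obtain c where c: "x < c" "c < b" "isCont l (ereal c)"
    using Mset_isCont_between[OF l] by blast
  have "(\<lambda>j. L j (ereal c)) \<longlonglongrightarrow> l (ereal c)"
    using conv c x unfolding Mconv_def by auto
  then have "\<forall>\<^sub>F j in sequentially. L j (ereal c) < l (ereal c) + \<eta>"
    using \<eta>(1) by (intro order_tendstoD) auto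
  moreover have "\<forall>\<^sub>F j in sequentially. u j < c"
    using u(2) c(1) by (rule order_tendstoD)
  moreover have "(\<lambda>j. y (u j)) \<longlonglongrightarrow> y x"
    using continuous_on_tendsto_compose[OF y u(2)] x u(1) by auto
  then have "\<forall>\<^sub>F j in sequentially. y (u j) > y x - \<epsilon> / 3"
    using \<open>0 < \<epsilon>\<close> by (intro order_tendstoD) auto
  moreover have "\<forall>\<^sub>F j in sequentially. e j < \<epsilon> / 3"
    using e \<open>0 < \<epsilon>\<close> by (intro order_tendstoD) auto
  ultimately obtain j where j: "L j (ereal c) < l (ereal c) + \<eta>" "u j < c"
      "y (u j) > y x - \<epsilon> / 3" "e j < \<epsilon> / 3"
    using eventually_happens'[OF sequentially_bot] by (metis (mono_tags, lifting) eventually_conj)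
  have "L j (ereal (u j)) \<le> L j (ereal c)"
    using MsetD(1)[OF L] j(2) by (auto simp: mono_def)
  then have "L j (ereal (u j)) \<le> l (ereal x) + 2 * \<eta>"
    using j(1) b c by fastforce
  then have "\<alpha> * L j (ereal (u j)) \<le> \<alpha> * l (ereal x) + 2 * \<alpha> * \<eta>"
    using mult_left_mono[OF _ less_imp_le[OF \<alpha>]] by (fastforce simp: algebra_simps)
  then show "Xpath \<alpha> y l x \<le> 0 + \<epsilon>"
    using le[of j] j(3,4) \<eta>(2) by linarith
qed

lemma hit_attained:
  assumes l: "l \<in> Mset" and y: "continuous_on {0..} y" and h: "hit \<alpha> y l = ereal r"
  shows "0 \<le> r" "Xpath \<alpha> y l r \<le> 0"
proof -
  show r: "0 \<le> r" using hit_nonneg[of \<alpha> y l] h by simp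
  show "Xpath \<alpha> y l r \<le> 0"
  proof (rule ccontr)
    assume neg: "\<not> ?thesis"
    then have "\<forall>\<^sub>F v in at_right r. Xpath \<alpha> y l v > 0"
      using Xpath_tendsto_at_right[OF l y r] by (intro order_tendstoD) auto
    then obtain b where "b > r" and b: "\<And>v. r < v \<Longrightarrow> v < b \<Longrightarrow> Xpath \<alpha> y l v > 0"
      using eventually_at_right[of r "r + 1"] by auto
    then have "hit \<alpha> y l < ereal b" using h by simp
    then obtain t where t: "0 \<le> t" "Xpath \<alpha> y l t \<le> 0" "t < b"
      unfolding hit_def Inf_less_iff by auto
    have "hit \<alpha> y l \<le> ereal t" unfolding hit_def using t by (intro Inf_lower) auto
    then have "r \<le> t" using h by simp
    then show False using b[of t] t neg by (cases "r = t") force+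
  qed
qed

lemma hit_le_iff:
  assumes l: "l \<in> Mset" and y: "continuous_on {0..} y"
  shows "hit \<alpha> y l \<le> ereal t \<longleftrightarrow> (\<exists>s\<in>{0..t}. Xpath \<alpha> y l s \<le> 0)"
proof
  assume h: "hit \<alpha> y l \<le> ereal t"
  then obtain r where r: "hit \<alpha> y l = ereal r"
    using hit_nonneg[of \<alpha> y l] by (cases "hit \<alpha> y l") auto
  then show "\<exists>s\<in>{0..t}. Xpath \<alpha> y l s \<le> 0"
    using hit_attained[OF l y r] h by auto
next
  assume "\<exists>s\<in>{0..t}. Xpath \<alpha> y l s \<le> 0"
  then obtain s where "s \<in> {0..t}" "Xpath \<alpha> y l s \<le> 0" by blast
  then show "hit \<alpha> y l \<le> ereal t"
    unfolding hit_def by (intro Inf_lower2[of "ereal s"]) auto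
qed

lemma hit_le_iff_rationals:
  assumes \<alpha>: "\<alpha> > 0" and l: "l \<in> Mset" and y: "continuous_on {0..} y" and t: "0 \<le> t"
  shows "hit \<alpha> y l \<le> ereal t \<longleftrightarrow>
    (\<forall>k::nat. \<exists>q\<in>insert t (\<rat> \<inter> {0..t}). Xpath \<alpha> y l q < inverse (Suc k))"
proof
  assume "hit \<alpha> y l \<le> ereal t"
  then obtain s where s: "s \<in> {0..t}" "Xpath \<alpha> y l s \<le> 0"
    using hit_le_iff[OF l y] by blast
  show "\<forall>k::nat. \<exists>q\<in>insert t (\<rat> \<inter> {0..t}). Xpath \<alpha> y l q < inverse (Suc k)"
  proof
    fix k :: nat
    have "0 < inverse (real (Suc k))" by simp
    then have pos: "Xpath \<alpha> y l s < inverse (Suc k)"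
      using s(2) by linarith
    show "\<exists>q\<in>insert t (\<rat> \<inter> {0..t}). Xpath \<alpha> y l q < inverse (Suc k)"
    proof (cases "s = t")
      case True
      then show ?thesis using pos by auto
    next
      case False
      have "\<forall>\<^sub>F v in at_right s. Xpath \<alpha> y l v < inverse (Suc k)"
        using Xpath_tendsto_at_right[OF l y] s(1) pos by (intro order_tendstoD) auto
      then obtain b where "b > s" and b: "\<And>v. s < v \<Longrightarrow> v < b \<Longrightarrow> Xpath \<alpha> y l v < inverse (Suc k)"
        using eventually_at_right[of s "s + 1"] by auto
      moreover obtain q where "q \<in> \<rat>" "s < q" "q < min b t"
        using Rats_dense_in_real[of s "min b t"] \<open>b > s\<close> s(1) False by auto
      ultimately show ?thesis using s(1) by force
    qed
  qed
next
  assume "\<forall>k::nat. \<exists>q\<in>insert t (\<rat> \<inter> {0..t}). Xpath \<alpha> y l q < inverse (Suc k)"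
  then obtain q where q: "\<And>k. q k \<in> {0..t}" "\<And>k. Xpath \<alpha> y l (q k) < inverse (Suc k)"
    using t by (metis IntE insertE atLeastAtMost_iff order_refl)
  obtain x r where x: "x \<in> {0..t}" and "strict_mono r" and qr: "(q \<circ> r) \<longlonglongrightarrow> x"
    using compact_Icc[THEN compact_imp_seq_compact] q(1) by (metis seq_compactE)
  have "((\<lambda>k. inverse (Suc k)) \<circ> r) \<longlonglongrightarrow> (0::real)"
    using LIMSEQ_inverse_real_of_nat \<open>strict_mono r\<close> by (rule LIMSEQ_subseq_LIMSEQ)
  then have "Xpath \<alpha> y l x \<le> 0"
    using q l by (intro Xpath_limit_nonpos[OF \<alpha> l _ Mconv_const y _ qr]) (auto intro: less_imp_le)
  then show "hit \<alpha> y l \<le> ereal t" using hit_le_iff[OF l y] x by auto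
qed

lemma eventually_hit_gt:
  assumes \<alpha>: "\<alpha> > 0" and l: "l \<in> Mset" and L: "\<And>n. L n \<in> Mset" and conv: "Mconv L l"
    and y: "continuous_on {0..} y" and t: "hit \<alpha> y l > ereal t"
  shows "\<forall>\<^sub>F n in sequentially. hit \<alpha> y (L n) > ereal t"
proof (rule ccontr)
  assume "\<not> ?thesis"
  then have "\<forall>N. \<exists>n\<ge>N. hit \<alpha> y (L n) \<le> ereal t"
    unfolding eventually_sequentially by (auto simp: not_less)
  then obtain g where g: "\<And>N. g N \<ge> N" "\<And>N. hit \<alpha> y (L (g N)) \<le> ereal t" by metis
  then have "\<forall>N. \<exists>s\<in>{0..t}. Xpath \<alpha> y (L (g N)) s \<le> 0"
    using hit_le_iff[OF L y] by blast
  then obtain u where u: "\<And>N. u N \<in> {0..t}" "\<And>N. Xpath \<alpha> y (L (g N)) (u N) \<le> 0"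
    by metis
  obtain x r where x: "x \<in> {0..t}" and r: "strict_mono r" and ur: "(u \<circ> r) \<longlonglongrightarrow> x"
    using compact_Icc[THEN compact_imp_seq_compact] u(1) by (metis seq_compactE)
  have "filterlim (\<lambda>j. g (r j)) sequentially sequentially"
    using g(1) seq_suble[OF r] le_trans
    by (intro filterlim_at_top_mono[OF filterlim_ident]) (metis always_eventually)
  then have "Xpath \<alpha> y l x \<le> 0"
    using L u by (intro Xpath_limit_nonpos[OF \<alpha> l _ Mconv_compose[OF conv] y _ ur tendsto_const]) auto
  then have "hit \<alpha> y l \<le> ereal t" using hit_le_iff[OF l y] x by auto
  then show False using t leD by blast
qed

(* The path must drop strictly below its value at the hitting time r: then Xpath is strictly
   negative just after r, at a continuity point c of l, and this strict inequality survives the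
   perturbation of l to L n. *)
lemma eventually_hit_le:
  assumes \<alpha>: "\<alpha> > 0" and l: "l \<in> Mset" and L: "\<And>n. L n \<in> Mset" and conv: "Mconv L l"
    and y: "continuous_on {0..} y" and r: "hit \<alpha> y l = ereal r" "r < t"
    and drop: "\<And>h. h > 0 \<Longrightarrow> \<exists>u\<in>{0..h}. y (r + u) < y r"
  shows "\<forall>\<^sub>F n in sequentially. hit \<alpha> y (L n) \<le> ereal t"
proof -
  have "0 \<le> r" and Xr: "Xpath \<alpha> y l r \<le> 0" using hit_attained[OF l y r(1)] by auto
  obtain u where u: "u \<in> {0..t - r}" "y (r + u) < y r" using drop[of "t - r"] r(2) by auto
  have "r + u \<in> {0..}" using \<open>0 \<le> r\<close> u(1) by auto
  then obtain d where "d > 0"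
    and d: "\<And>v. v \<in> {0..} \<Longrightarrow> dist v (r + u) < d \<Longrightarrow> dist (y v) (y (r + u)) < y r - y (r + u)"
    using y u(2) unfolding continuous_on_iff by (metis diff_gt_0_iff_gt)
  have "max r (r + u - d) < min t (r + u + d)" using \<open>d > 0\<close> u r(2) by auto
  then obtain c where c: "max r (r + u - d) < c" "c < min t (r + u + d)" "isCont l (ereal c)"
    using Mset_isCont_between[OF l] by blast
  have "dist (y c) (y (r + u)) < y r - y (r + u)"
    using d[of c] c \<open>0 \<le> r\<close> by (auto simp: dist_real_def)
  then have "y c < y r" by (auto simp: dist_real_def)
  moreover have "l (ereal r) \<le> l (ereal c)" using MsetD(1)[OF l] c by (auto simp: mono_def)
  then have "\<alpha> * l (ereal r) \<le> \<alpha> * l (ereal c)" using \<alpha> by simp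
  ultimately have neg: "Xpath \<alpha> y l c < 0" using Xr by linarith
  have "(\<lambda>n. L n (ereal c)) \<longlonglongrightarrow> l (ereal c)"
    using conv c \<open>0 \<le> r\<close> unfolding Mconv_def by auto
  then have "(\<lambda>n. Xpath \<alpha> y (L n) c) \<longlonglongrightarrow> Xpath \<alpha> y l c"
    by (intro tendsto_diff tendsto_mult tendsto_const)
  from this neg have "\<forall>\<^sub>F n in sequentially. Xpath \<alpha> y (L n) c < 0"
    by (rule order_tendstoD(2))
  then show ?thesis
  proof (rule eventually_mono)
    fix n assume "Xpath \<alpha> y (L n) c < 0"
    then have "hit \<alpha> y (L n) \<le> ereal c"
      unfolding hit_le_iff[OF L y] using c \<open>0 \<le> r\<close> by (intro bexI[of _ c]) auto
    then show "hit \<alpha> y (L n) \<le> ereal t" using c by (auto intro: order_trans)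
  qed
qed

lemma eventually_hit_le_iff:
  assumes \<alpha>: "\<alpha> > 0" and l: "l \<in> Mset" and L: "\<And>n. L n \<in> Mset" and conv: "Mconv L l"
    and y: "continuous_on {0..} y" and ne: "hit \<alpha> y l \<noteq> ereal t"
    and drop: "\<And>r h. hit \<alpha> y l = ereal r \<Longrightarrow> h > 0 \<Longrightarrow> \<exists>u\<in>{0..h}. y (r + u) < y r"
  shows "\<forall>\<^sub>F n in sequentially. hit \<alpha> y (L n) \<le> ereal t \<longleftrightarrow> hit \<alpha> y l \<le> ereal t"
proof (cases "hit \<alpha> y l < ereal t")
  case True
  moreover obtain r where r: "hit \<alpha> y l = ereal r"
    using True hit_nonneg[of \<alpha> y l] by (cases "hit \<alpha> y l") auto
  ultimately have "\<forall>\<^sub>F n in sequentially. hit \<alpha> y (L n) \<le> ereal t"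
    by (intro eventually_hit_le[OF \<alpha> l L conv y r]) (use drop[OF r] in auto)
  then show ?thesis by (rule eventually_mono) (use True in auto)
next
  case False
  then have gt: "ereal t < hit \<alpha> y l" using ne by auto
  then have "\<forall>\<^sub>F n in sequentially. ereal t < hit \<alpha> y (L n)"
    by (rule eventually_hit_gt[OF \<alpha> l L conv y])
  then show ?thesis by (rule eventually_mono) (use gt in auto)
qed

section \<open>Distribution functions and random times\<close>

lemma ereal_le_iff_le_plus_inverse:
  "x \<le> ereal t \<longleftrightarrow> (\<forall>n. x \<le> ereal (t + inverse (Suc n)))"
proof (cases x)
  case (real r)
  have "(\<lambda>n. t + inverse (Suc n)) \<longlonglongrightarrow> t + 0"
    by (intro tendsto_add tendsto_const LIMSEQ_inverse_real_of_nat)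
  then have "r \<le> t" if "\<forall>n. r \<le> t + inverse (Suc n)"
    using that by (intro LIMSEQ_le_const) auto
  moreover have "0 \<le> inverse (real (Suc n))" for n by simp
  ultimately show ?thesis using real by (force intro: order_trans)
qed auto

lemma ereal_less_iff_le_minus_inverse:
  "x < ereal t \<longleftrightarrow> (\<exists>n. x \<le> ereal (t - inverse (Suc n)))"
proof (cases x)
  case (real r)
  have "\<exists>n. r \<le> t - inverse (Suc n)" if "r < t"
  proof -
    obtain n where "inverse (real (Suc n)) < t - r"
      using reals_Archimedean[of "t - r"] \<open>r < t\<close> by auto
    then show ?thesis by (intro exI[of _ n]) simp
  qed
  moreover have "r < t" if "r \<le> t - inverse (Suc n)" for n
  proof -
    have "0 < inverse (real (Suc n))" by simp
    then show ?thesis using that by linarith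
  qed
  ultimately show ?thesis using real by auto
qed auto

lemma mono_bounded_tendsto_at_left:
  fixes f :: "ereal \<Rightarrow> real"
  assumes mono: "mono f" and bound: "\<And>t. f t \<le> B"
  shows "\<exists>L. (f \<longlongrightarrow> L) (at_left x)"
proof (cases "x = -\<infinity>")
  case True
  then have "at_left x = bot"
    using trivial_limit_at_left_bot[where 'a=ereal] by (simp add: bot_ereal_def)
  then show ?thesis by auto
next
  case False
  then have v: "-\<infinity> < x" by (cases x) auto
  have ne: "f ` {..<x} \<noteq> {}" using v by blast
  have bdd: "bdd_above (f ` {..<x})" using bound by (intro bdd_aboveI2) auto
  have "(f \<longlongrightarrow> Sup (f ` {..<x})) (at_left x)"
  proof (rule order_tendstoI)
    fix a assume "a < Sup (f ` {..<x})"
    then obtain w where w: "w < x" "a < f w" using less_cSup_iff[OF ne bdd] by auto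
    show "\<forall>\<^sub>F y in at_left x. a < f y"
      unfolding eventually_at_left[OF w(1)]
      using w mono by (intro exI[of _ w]) (auto simp: mono_def intro: less_le_trans)
  next
    fix a assume "Sup (f ` {..<x}) < a"
    moreover have "f y \<le> Sup (f ` {..<x})" if "y < x" for y
      using bdd that by (intro cSup_upper) auto
    ultimately show "\<forall>\<^sub>F y in at_left x. f y < a"
      unfolding eventually_at_left[OF v] using v by (auto intro: le_less_trans)
  qed
  then show ?thesis by blast
qed

context prob_space
begin

lemma prob_le_continuous_at_right:
  assumes T: "T \<in> borel_measurable M"
  shows "continuous (at_right (ereal t)) (\<lambda>x. prob {\<omega>\<in>space M. T \<omega> \<le> x})"
proof -
  define F where "F = (\<lambda>x. prob {\<omega>\<in>space M. T \<omega> \<le> x})"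
  have sets: "{\<omega>\<in>space M. T \<omega> \<le> x} \<in> sets M" for x using T by measurable
  have "(\<lambda>n. prob {\<omega>\<in>space M. T \<omega> \<le> ereal (t + inverse (Suc n))}) \<longlonglongrightarrow>
      prob (\<Inter>n. {\<omega>\<in>space M. T \<omega> \<le> ereal (t + inverse (Suc n))})"
    by (intro finite_Lim_measure_decseq)
      (auto simp: decseq_def sets intro: order_trans simp del: of_nat_Suc)
  moreover have "(\<Inter>n. {\<omega>\<in>space M. T \<omega> \<le> ereal (t + inverse (Suc n))}) = {\<omega>\<in>space M. T \<omega> \<le> ereal t}"
    using ereal_le_iff_le_plus_inverse[of _ t] by auto
  ultimately have lim: "(\<lambda>n. F (ereal (t + inverse (Suc n)))) \<longlonglongrightarrow> F (ereal t)"
    by (simp add: F_def)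
  have "continuous (at_right t) (F \<circ> ereal)"
  proof (subst continuous_at_right_real_increasing, safe)
    show "(F \<circ> ereal) a \<le> (F \<circ> ereal) b" if "a \<le> b" for a b
      using that by (auto simp: F_def intro!: finite_measure_mono sets intro: order_trans)
    fix \<epsilon> :: real assume "\<epsilon> > 0"
    then have "\<forall>\<^sub>F n in sequentially. F (ereal (t + inverse (Suc n))) < F (ereal t) + \<epsilon>"
      using lim by (intro order_tendstoD) auto
    then obtain n where "F (ereal (t + inverse (Suc n))) < F (ereal t) + \<epsilon>"
      by (auto simp: eventually_sequentially)
    then show "\<exists>\<delta>>0. (F \<circ> ereal) (t + \<delta>) - (F \<circ> ereal) t < \<epsilon>"
      by (intro exI[of _ "inverse (Suc n)"]) auto
  qed
  then have "((\<lambda>v. F (ereal v)) \<longlongrightarrow> F (ereal t)) (at_right t)"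
    by (simp add: continuous_within o_def)
  then show ?thesis
    unfolding F_def[symmetric] continuous_within by (simp add: at_right_ereal filterlim_filtermap)
qed

lemma distribution_function_in_Mset:
  assumes T: "T \<in> borel_measurable M" and T0: "\<And>\<omega>. \<omega> \<in> space M \<Longrightarrow> 0 \<le> T \<omega>"
  shows "(\<lambda>x. prob {\<omega>\<in>space M. T \<omega> \<le> x}) \<in> Mset"
proof -
  define F where "F = (\<lambda>x. prob {\<omega>\<in>space M. T \<omega> \<le> x})"
  have sets: "{\<omega>\<in>space M. T \<omega> \<le> x} \<in> sets M" for x using T by measurable
  have mono: "mono F"
    unfolding F_def mono_def by (auto intro!: finite_measure_mono sets intro: order_trans)
  have F_neg: "F x = 0" if "x < 0" for x
  proof -
    have "{\<omega>\<in>space M. T \<omega> \<le> x} = {}" using T0 that by (fastforce simp: not_le)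
    then show ?thesis by (simp only: F_def) simp
  qed
  have "continuous (at_right x) F" for x
  proof (cases x)
    case PInf
    then have "at_right x = bot"
      using trivial_limit_at_right_top[where 'a=ereal] by (simp add: top_ereal_def)
    then show ?thesis by (simp add: continuous_def)
  next
    case MInf
    have "\<forall>\<^sub>F v in at_right x. F v = F x"
      using MInf F_neg by (subst eventually_at_right[of x 0]) (auto intro!: exI[of _ 0])
    then show ?thesis unfolding continuous_within by (rule tendsto_eventually)
  next
    case (real t)
    show ?thesis using T unfolding real F_def by (rule prob_le_continuous_at_right)
  qed
  moreover have "(F \<longlongrightarrow> 0) (at_left 0)"
    by (rule tendsto_eventually) (auto simp: eventually_at_left[of "-1"] F_neg intro!: exI[of _ "-1"])
  moreover have "F \<infinity> = 1" by (simp add: F_def prob_space)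
  moreover have "\<exists>L. (F \<longlongrightarrow> L) (at_left x)" for x
    using mono by (rule mono_bounded_tendsto_at_left[where B=1]) (simp add: F_def)
  moreover have "0 \<le> F x" "F x \<le> 1" for x by (simp_all add: F_def)
  ultimately have "F \<in> Mset" using mono unfolding Mset_def by blast
  then show ?thesis by (simp add: F_def)
qed

lemma prob_eq_0_at_isCont:
  assumes T: "T \<in> borel_measurable M"
    and cont: "isCont (\<lambda>x. prob {\<omega>\<in>space M. T \<omega> \<le> x}) (ereal t)"
  shows "prob {\<omega>\<in>space M. T \<omega> = ereal t} = 0"
proof -
  let ?S = "\<lambda>x. {\<omega>\<in>space M. T \<omega> \<le> x}"
  have sets: "?S x \<in> sets M" for x using T by measurable
  have "(\<lambda>n. prob (?S (ereal (t - inverse (Suc n))))) \<longlonglongrightarrow> prob (\<Union>n. ?S (ereal (t - inverse (Suc n))))"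
    by (intro finite_Lim_measure_incseq)
      (auto simp: incseq_def sets intro: order_trans simp del: of_nat_Suc)
  moreover have "(\<Union>n. ?S (ereal (t - inverse (Suc n)))) = {\<omega>\<in>space M. T \<omega> < ereal t}"
    using ereal_less_iff_le_minus_inverse[of _ t] by auto
  moreover have "(\<lambda>n. ereal (t - inverse (Suc n))) \<longlonglongrightarrow> ereal t"
    using tendsto_diff[OF tendsto_const[of t] LIMSEQ_inverse_real_of_nat] by simp
  then have "(\<lambda>n. prob (?S (ereal (t - inverse (Suc n))))) \<longlonglongrightarrow> prob (?S (ereal t))"
    by (rule isCont_tendsto_compose[OF cont])
  ultimately have "prob {\<omega>\<in>space M. T \<omega> < ereal t} = prob (?S (ereal t))"
    using LIMSEQ_unique by auto
  moreover have "{\<omega>\<in>space M. T \<omega> = ereal t} = ?S (ereal t) - {\<omega>\<in>space M. T \<omega> < ereal t}"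
    by auto
  moreover have "prob (?S (ereal t) - {\<omega>\<in>space M. T \<omega> < ereal t}) =
      prob (?S (ereal t)) - prob {\<omega>\<in>space M. T \<omega> < ereal t}"
    using T by (intro finite_measure_Diff sets) (auto, measurable)
  ultimately show ?thesis by simp
qed

end

lemma (in finite_measure) measure_tendsto_if_AE_eventually_eq:
  assumes A: "\<And>n. A n \<in> sets M" and B: "B \<in> sets M"
    and AE: "AE x in M. \<forall>\<^sub>F n in sequentially. x \<in> A n \<longleftrightarrow> x \<in> B"
  shows "(\<lambda>n. measure M (A n)) \<longlonglongrightarrow> measure M B"
proof -
  have "(\<lambda>n. integral\<^sup>L M (indicator (A n))) \<longlonglongrightarrow> (integral\<^sup>L M (indicator B) :: real)"
  proof (rule integral_dominated_convergence[where w="\<lambda>_. 1"])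
    show "AE x in M. (\<lambda>n. indicator (A n) x :: real) \<longlonglongrightarrow> indicator B x"
      using AE by eventually_elim (auto elim!: eventually_mono intro: tendsto_eventually)
  qed (use A B in \<open>auto simp: indicator_def\<close>)
  then show ?thesis using A B by simp
qed

lemma INF_atLeastAtMost_eq_0_iff:
  fixes g :: "real \<Rightarrow> real"
  assumes "0 \<le> h" "continuous_on {0..h} g" "g 0 = 0"
  shows "(INF s\<in>{0..h}. g s) = 0 \<longleftrightarrow> (\<forall>s\<in>{0..h}. 0 \<le> g s)"
proof
  have "bdd_below (g ` {0..h})"
    using compact_continuous_image[OF assms(2) compact_Icc]
    by (intro bounded_imp_bdd_below compact_imp_bounded)
  moreover assume "(INF s\<in>{0..h}. g s) = 0"
  ultimately show "\<forall>s\<in>{0..h}. 0 \<le> g s"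
    using cINF_lower[of g "{0..h}"] by fastforce
next
  assume "\<forall>s\<in>{0..h}. 0 \<le> g s"
  then have "0 \<le> (INF s\<in>{0..h}. g s)" using assms(1) by (intro cINF_greatest) auto
  moreover have "(INF s\<in>{0..h}. g s) \<le> g 0"
    using \<open>\<forall>s\<in>{0..h}. 0 \<le> g s\<close> assms(1) by (intro cINF_lower bdd_belowI2) auto
  ultimately show "(INF s\<in>{0..h}. g s) = 0" using assms(3) by simp
qed

lemma nonneg_on_atLeastAtMost_iff_Rats:
  fixes g :: "real \<Rightarrow> real"
  assumes "a < b" "continuous_on {a..b} g"
  shows "(\<forall>s\<in>{a..b}. 0 \<le> g s) \<longleftrightarrow> (\<forall>q\<in>\<rat> \<inter> {a..b}. 0 \<le> g q)"
proof -
  have "closure ({a..b} \<inter> \<rat>) = closure {a..b}"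
    by (rule closure_convex_Int_superset) (use assms(1) in \<open>auto simp: Rats_closure_real\<close>)
  then have closure_eq: "closure ({a..b} \<inter> \<rat>) = {a..b}" by simp
  have "0 \<le> g s" if "s \<in> {a..b}" and "\<forall>q\<in>\<rat> \<inter> {a..b}. 0 \<le> g q" for s
    using continuous_ge_on_closure[of "{a..b} \<inter> \<rat>" g s 0] closure_eq assms(2) that by auto
  then show ?thesis by blast
qed

lemma measurable_process_at_random_time:
  fixes Y :: "real \<Rightarrow> 'w \<Rightarrow> real"
  assumes Y: "\<And>t. 0 \<le> t \<Longrightarrow> Y t \<in> borel_measurable M"
    and cont: "\<And>\<omega>. \<omega> \<in> space M \<Longrightarrow> continuous_on {0..} (\<lambda>t. Y t \<omega>)"
    and R: "R \<in> borel_measurable M" and R0: "\<And>\<omega>. \<omega> \<in> space M \<Longrightarrow> 0 \<le> R \<omega>"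
  shows "(\<lambda>\<omega>. Y (R \<omega>) \<omega>) \<in> borel_measurable M"
proof (rule borel_measurable_LIMSEQ_real)
  define D where "D m \<omega> = nat \<lceil>2^m * R \<omega>\<rceil>" for m :: nat and \<omega>
  show "(\<lambda>\<omega>. Y (D m \<omega> / 2^m) \<omega>) \<in> borel_measurable M" for m
  proof (rule measurable_compose_countable[where f="\<lambda>i \<omega>. Y (i / 2^m) \<omega>" and g="D m"])
    show "(\<lambda>\<omega>. Y (real i / 2^m) \<omega>) \<in> borel_measurable M" for i by (intro Y) simp
    show "D m \<in> measurable M (count_space UNIV)" unfolding D_def using R by measurable
  qed
  fix \<omega> assume \<omega>: "\<omega> \<in> space M"
  have D: "real (D m \<omega>) = \<lceil>2^m * R \<omega>\<rceil>" for m
    using R0[OF \<omega>] by (simp add: D_def)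
  have lower: "R \<omega> \<le> D m \<omega> / 2^m" for m
    using le_of_int_ceiling[of "2^m * R \<omega>"] by (simp add: D le_divide_eq mult.commute)
  have upper: "D m \<omega> / 2^m \<le> R \<omega> + inverse (2^m)" for m
  proof -
    have "D m \<omega> / 2^m \<le> (2^m * R \<omega> + 1) / 2^m"
      using of_int_ceiling_le_add_one[of "2^m * R \<omega>"] by (intro divide_right_mono) (simp_all add: D)
    also have "\<dots> = R \<omega> + inverse (2^m)" by (simp add: field_simps)
    finally show ?thesis .
  qed
  have "(\<lambda>m. inverse ((2::real)^m)) \<longlonglongrightarrow> 0"
    by (rule LIMSEQ_inverse_realpow_zero) simp
  then have lim: "(\<lambda>m. R \<omega> + inverse (2^m)) \<longlonglongrightarrow> R \<omega>"
    using tendsto_add[OF tendsto_const[of "R \<omega>"]] by fastforce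
  have "(\<lambda>m. D m \<omega> / 2^m) \<longlonglongrightarrow> R \<omega>"
    by (rule tendsto_sandwich[OF _ _ tendsto_const lim]) (simp_all add: lower upper)
  then show "(\<lambda>m. Y (D m \<omega> / 2^m) \<omega>) \<longlonglongrightarrow> Y (R \<omega>) \<omega>"
    by (rule continuous_on_tendsto_compose[OF cont[OF \<omega>]]) (use R0[OF \<omega>] in auto)
qed

section \<open>The hitting time of the perturbed process\<close>

context
  fixes P :: "'w measure" and X0 :: "'w \<Rightarrow> real" and Z :: "real \<Rightarrow> 'w \<Rightarrow> real" and \<alpha> :: real
  assumes prob: "prob_space P" and \<alpha>: "\<alpha> > 0" and X0: "X0 \<in> borel_measurable P"
    and Z: "\<And>t. 0 \<le> t \<Longrightarrow> Z t \<in> borel_measurable P"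
    and Z_cont: "\<And>\<omega>. \<omega> \<in> space P \<Longrightarrow> continuous_on {0..} (\<lambda>t. Z t \<omega>)"
begin

interpretation prob_space P by (rule prob)

lemma path_continuous: "\<omega> \<in> space P \<Longrightarrow> continuous_on {0..} (\<lambda>t. X0 \<omega> + Z t \<omega>)"
  using Z_cont by (intro continuous_on_add continuous_on_const) auto

lemma tau_le_eq_countable:
  assumes l: "l \<in> Mset" and t: "0 \<le> t"
  shows "{\<omega>\<in>space P. tau X0 Z \<alpha> l \<omega> \<le> ereal t} =
    (\<Inter>k. \<Union>q\<in>insert t (\<rat> \<inter> {0..t}).
       (\<lambda>\<omega>. X0 \<omega> + Z q \<omega>) -` {..<inverse (Suc k) + \<alpha> * l (ereal q)} \<inter> space P)"
    (is "?L = ?R")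
proof -
  have eq: "tau X0 Z \<alpha> l \<omega> \<le> ereal t \<longleftrightarrow>
      (\<forall>k::nat. \<exists>q\<in>insert t (\<rat> \<inter> {0..t}). X0 \<omega> + Z q \<omega> < inverse (Suc k) + \<alpha> * l (ereal q))"
    if "\<omega> \<in> space P" for \<omega>
    unfolding tau_eq_hit hit_le_iff_rationals[OF \<alpha> l path_continuous[OF that] t]
    by (simp only: diff_less_eq)
  show ?thesis
  proof (rule set_eqI)
    fix \<omega> show "\<omega> \<in> ?L \<longleftrightarrow> \<omega> \<in> ?R"
      by (cases "\<omega> \<in> space P") (simp_all add: eq del: of_nat_Suc)
  qed
qed

lemma tau_le_in_nat_filt:
  assumes l: "l \<in> Mset" and t: "0 \<le> t"
  shows "{\<omega>\<in>space P. tau X0 Z \<alpha> l \<omega> \<le> ereal t} \<in> sets (nat_filt P (\<lambda>t \<omega>. X0 \<omega> + Z t \<omega>) t)"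
proof -
  let ?G = "{(\<lambda>\<omega>. X0 \<omega> + Z s \<omega>) -` B \<inter> space P | s B. 0 \<le> s \<and> s \<le> t \<and> B \<in> sets borel}"
  have "?G \<subseteq> Pow (space P)" by auto
  then have sets: "sets (nat_filt P (\<lambda>t \<omega>. X0 \<omega> + Z t \<omega>) t) = sigma_sets (space P) ?G"
    unfolding nat_filt_def by (rule sets_measure_of)
  have "(\<lambda>\<omega>. X0 \<omega> + Z q \<omega>) -` B \<inter> space P \<in> sets (nat_filt P (\<lambda>t \<omega>. X0 \<omega> + Z t \<omega>) t)"
    if "0 \<le> q" "q \<le> t" "B \<in> sets borel" for q B
    unfolding sets using that by (intro sigma_sets.Basic) blast
  then show ?thesis
    unfolding tau_le_eq_countable[OF l t] using t
    by (intro sets.countable_INT' sets.countable_UN' countable_insert countable_Int1 countable_rat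
        image_subsetI) auto
qed

lemma sets_nat_filt_subset: "sets (nat_filt P (\<lambda>t \<omega>. X0 \<omega> + Z t \<omega>) t) \<subseteq> sets P"
proof -
  let ?G = "{(\<lambda>\<omega>. X0 \<omega> + Z s \<omega>) -` B \<inter> space P | s B. 0 \<le> s \<and> s \<le> t \<and> B \<in> sets borel}"
  have G: "?G \<subseteq> sets P"
  proof safe
    fix s :: real and B :: "real set" assume "0 \<le> s" "B \<in> sets borel"
    then have "(\<lambda>\<omega>. X0 \<omega> + Z s \<omega>) \<in> borel_measurable P" using X0 Z by measurable
    then show "(\<lambda>\<omega>. X0 \<omega> + Z s \<omega>) -` B \<inter> space P \<in> sets P"
      using \<open>B \<in> sets borel\<close> by (rule measurable_sets)
  qed
  then have "?G \<subseteq> Pow (space P)" using sets.sets_into_space by blast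
  then show ?thesis
    unfolding nat_filt_def using sets.sigma_sets_subset[OF G] by (simp add: sets_measure_of)
qed

lemma tau_measurable:
  assumes l: "l \<in> Mset"
  shows "tau X0 Z \<alpha> l \<in> borel_measurable P"
proof (rule borel_measurableI_le)
  fix x :: ereal
  show "{\<omega>\<in>space P. tau X0 Z \<alpha> l \<omega> \<le> x} \<in> sets P"
  proof (cases "x < 0")
    case True
    then have empty: "{\<omega>\<in>space P. tau X0 Z \<alpha> l \<omega> \<le> x} = {}"
      using tau_nonneg[of X0 Z \<alpha> l] by (auto simp: not_le intro: less_le_trans)
    show ?thesis unfolding empty by simp
  next
    case False
    then consider "x = \<infinity>" | t where "x = ereal t" "0 \<le> t" by (cases x) auto
    then show ?thesis
    proof cases
      case 2
      then show ?thesis using tau_le_in_nat_filt[OF l] sets_nat_filt_subset by blast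
    qed simp
  qed
qed

lemma tau_is_stopping_time: "l \<in> Mset \<Longrightarrow> is_stopping_time P (\<lambda>t \<omega>. X0 \<omega> + Z t \<omega>) (tau X0 Z \<alpha> l)"
  by (simp add: is_stopping_time_def tau_nonneg tau_le_in_nat_filt)

lemma increment_continuous:
  assumes "\<omega> \<in> space P" "0 \<le> r"
  shows "continuous_on {0..h} (\<lambda>s. Z (r + s) \<omega> - Z r \<omega>)"
proof -
  have "continuous_on {0..h} (\<lambda>s. Z (r + s) \<omega>)"
    by (rule continuous_on_compose2[OF Z_cont[OF assms(1)] continuous_on_add[OF continuous_on_const continuous_on_id]])
      (use assms(2) in auto)
  then show ?thesis by (intro continuous_on_diff continuous_on_const)
qed

lemma crossing_event_sets:
  assumes l: "l \<in> Mset" and h: "0 < h"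
  shows "{\<omega> \<in> space P. tau X0 Z \<alpha> l \<omega> < \<infinity> \<and>
    (INF s\<in>{0..h}. Z (real_of_ereal (tau X0 Z \<alpha> l \<omega>) + s) \<omega> - Z (real_of_ereal (tau X0 Z \<alpha> l \<omega>)) \<omega>) = 0}
    \<in> sets P"
proof -
  let ?R = "\<lambda>\<omega>. real_of_ereal (tau X0 Z \<alpha> l \<omega>)"
  have T[measurable]: "tau X0 Z \<alpha> l \<in> borel_measurable P" by (rule tau_measurable[OF l])
  have R0: "0 \<le> ?R \<omega>" for \<omega> by (simp add: real_of_ereal_pos tau_nonneg)
  have "(\<lambda>\<omega>. ?R \<omega> + q) \<in> borel_measurable P" for q by measurable
  then have Zq: "(\<lambda>\<omega>. Z (?R \<omega> + q) \<omega>) \<in> borel_measurable P" if "0 \<le> q" for q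
    using that R0 by (intro measurable_process_at_random_time[OF Z Z_cont]) auto
  have "(INF s\<in>{0..h}. Z (?R \<omega> + s) \<omega> - Z (?R \<omega>) \<omega>) = 0 \<longleftrightarrow>
      (\<forall>q\<in>\<rat> \<inter> {0..h}. 0 \<le> Z (?R \<omega> + q) \<omega> - Z (?R \<omega>) \<omega>)" if "\<omega> \<in> space P" for \<omega>
    using INF_atLeastAtMost_eq_0_iff[OF _ increment_continuous[OF that R0[of \<omega>]]]
      nonneg_on_atLeastAtMost_iff_Rats[OF h increment_continuous[OF that R0[of \<omega>]]] h
    by simp
  then have "{\<omega> \<in> space P. tau X0 Z \<alpha> l \<omega> < \<infinity> \<and> (INF s\<in>{0..h}. Z (?R \<omega> + s) \<omega> - Z (?R \<omega>) \<omega>) = 0} =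
      {\<omega> \<in> space P. tau X0 Z \<alpha> l \<omega> < \<infinity>} \<inter>
      (\<Inter>q\<in>\<rat> \<inter> {0..h}. {\<omega> \<in> space P. 0 \<le> Z (?R \<omega> + q) \<omega> - Z (?R \<omega>) \<omega>})"
    by auto
  also have "\<dots> \<in> sets P"
  proof (intro sets.Int sets.countable_INT' countable_Int1 countable_rat image_subsetI)
    show "{\<omega> \<in> space P. tau X0 Z \<alpha> l \<omega> < \<infinity>} \<in> sets P" by measurable
    show "\<rat> \<inter> {0..h} \<noteq> {}" using h by (auto intro: bexI[of _ 0])
    fix q assume "q \<in> \<rat> \<inter> {0..h}"
    then have [measurable]: "(\<lambda>\<omega>. Z (?R \<omega> + q) \<omega>) \<in> borel_measurable P" by (intro Zq) simp
    have [measurable]: "(\<lambda>\<omega>. Z (?R \<omega>) \<omega>) \<in> borel_measurable P" using Zq[of 0] by simp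
    show "{\<omega> \<in> space P. 0 \<le> Z (?R \<omega> + q) \<omega> - Z (?R \<omega>) \<omega>} \<in> sets P" by measurable
  qed
  finally show ?thesis .
qed

lemma AE_drop_after_tau:
  assumes cp: "crossing_property P X0 Z" and l: "l \<in> Mset"
  shows "AE \<omega> in P. \<forall>r. tau X0 Z \<alpha> l \<omega> = ereal r \<longrightarrow> (\<forall>h>0. \<exists>u\<in>{0..h}. Z (r + u) \<omega> < Z r \<omega>)"
proof -
  let ?E = "\<lambda>h. {\<omega> \<in> space P. tau X0 Z \<alpha> l \<omega> < \<infinity> \<and>
    (INF s\<in>{0..h}. Z (real_of_ereal (tau X0 Z \<alpha> l \<omega>) + s) \<omega> - Z (real_of_ereal (tau X0 Z \<alpha> l \<omega>)) \<omega>) = 0}"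
  have "?E h \<in> null_sets P" if "0 < h" for h
    using cp tau_is_stopping_time[OF l] crossing_event_sets[OF l that] that
    unfolding crossing_property_def by (auto simp: null_sets_def emeasure_eq_measure)
  then have "AE \<omega> in P. \<omega> \<notin> ?E (inverse (Suc k))" for k
    by (intro AE_not_in) simp
  then have "AE \<omega> in P. \<forall>k::nat. \<omega> \<notin> ?E (inverse (Suc k))"
    unfolding AE_all_countable by blast
  with AE_space show ?thesis
  proof eventually_elim
    case (elim \<omega>)
    show ?case
    proof (intro allI impI)
      fix r h :: real assume r: "tau X0 Z \<alpha> l \<omega> = ereal r" and "0 < h"
      have "0 \<le> r" using tau_nonneg[of X0 Z \<alpha> l \<omega>] r by simp
      obtain k where k: "inverse (Suc k) < h" using reals_Archimedean[OF \<open>0 < h\<close>] by blast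
      have "(INF s\<in>{0..inverse (Suc k)}. Z (r + s) \<omega> - Z r \<omega>) \<noteq> 0"
        using elim r by auto
      then obtain u where "u \<in> {0..inverse (Suc k)}" "Z (r + u) \<omega> - Z r \<omega> < 0"
        using INF_atLeastAtMost_eq_0_iff[OF _ increment_continuous[OF elim(1) \<open>0 \<le> r\<close>]]
        by (fastforce simp: not_le)
      then show "\<exists>u\<in>{0..h}. Z (r + u) \<omega> < Z r \<omega>" using k by (intro bexI[of _ u]) auto
    qed
  qed
qed

lemma Gamma_in_Mset: "l \<in> Mset \<Longrightarrow> Gamma P X0 Z \<alpha> l \<in> Mset"
  unfolding Gamma_def[abs_def] using tau_measurable tau_nonneg by (rule distribution_function_in_Mset)

lemma Gamma_tendsto_at_isCont:
  assumes cp: "crossing_property P X0 Z" and l: "l \<in> Mset" and L: "\<And>n. L n \<in> Mset"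
    and conv: "Mconv L l" and t: "0 \<le> t" and cont: "isCont (Gamma P X0 Z \<alpha> l) (ereal t)"
  shows "(\<lambda>n. Gamma P X0 Z \<alpha> (L n) (ereal t)) \<longlonglongrightarrow> Gamma P X0 Z \<alpha> l (ereal t)"
proof -
  let ?T = "tau X0 Z \<alpha> l"
  have T[measurable]: "?T \<in> borel_measurable P" by (rule tau_measurable[OF l])
  have "prob {\<omega>\<in>space P. ?T \<omega> = ereal t} = 0"
    using cont unfolding Gamma_def[abs_def] by (rule prob_eq_0_at_isCont[OF T])
  then have "{\<omega>\<in>space P. ?T \<omega> = ereal t} \<in> null_sets P"
    by (auto simp: null_sets_def emeasure_eq_measure)
  then have "AE \<omega> in P. \<omega> \<notin> {\<omega>\<in>space P. ?T \<omega> = ereal t}" by (rule AE_not_in)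
  then have "AE \<omega> in P. ?T \<omega> \<noteq> ereal t" using AE_space by eventually_elim auto
  with AE_drop_after_tau[OF cp l] AE_space
  have "AE \<omega> in P. \<forall>\<^sub>F n in sequentially.
      \<omega> \<in> {\<omega>\<in>space P. tau X0 Z \<alpha> (L n) \<omega> \<le> ereal t} \<longleftrightarrow> \<omega> \<in> {\<omega>\<in>space P. ?T \<omega> \<le> ereal t}"
  proof eventually_elim
    case (elim \<omega>)
    have "\<forall>\<^sub>F n in sequentially. tau X0 Z \<alpha> (L n) \<omega> \<le> ereal t \<longleftrightarrow> ?T \<omega> \<le> ereal t"
      unfolding tau_eq_hit using elim(1,3)
      by (intro eventually_hit_le_iff[OF \<alpha> l L conv path_continuous[OF elim(2)]]) (auto simp: tau_eq_hit)
    then show ?case using elim(2) by simp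
  qed
  moreover have "{\<omega>\<in>space P. tau X0 Z \<alpha> (L n) \<omega> \<le> ereal t} \<in> sets P" for n
    using tau_measurable[OF L[of n]] by measurable
  ultimately show ?thesis
    unfolding Gamma_def by (intro measure_tendsto_if_AE_eventually_eq) (auto, measurable)
qed

end

theorem proposition2p2:
  fixes P :: "'w measure" and X0 :: "'w \<Rightarrow> real" and Z :: "real \<Rightarrow> 'w \<Rightarrow> real" and \<alpha> :: real
  assumes "prob_space P"
    and "\<alpha> > 0"
    and "X0 \<in> borel_measurable P"
    and "\<And>t. 0 \<le> t \<Longrightarrow> Z t \<in> borel_measurable P"
    and "\<And>\<omega>. \<omega> \<in> space P \<Longrightarrow> continuous_on {0..} (\<lambda>t. Z t \<omega>)"
    and "\<And>\<omega>. \<omega> \<in> space P \<Longrightarrow> Z 0 \<omega> = 0"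
    and "prob_space.indep_set P
           (sigma_sets (space P) {X0 -` A \<inter> space P | A. A \<in> sets borel})
           (sigma_sets (space P) {Z t -` A \<inter> space P | t A. 0 \<le> t \<and> A \<in> sets borel})"
    and "crossing_property P X0 Z"
  shows "(\<forall>l \<in> Mset. Gamma P X0 Z \<alpha> l \<in> Mset) \<and>
         (\<forall>ls l. (\<forall>n. ls n \<in> Mset) \<and> l \<in> Mset \<and> Mconv ls l \<longrightarrow>
            Mconv (\<lambda>n. Gamma P X0 Z \<alpha> (ls n)) (Gamma P X0 Z \<alpha> l))"
proof (intro conjI ballI allI impI)
  show "Gamma P X0 Z \<alpha> l \<in> Mset" if "l \<in> Mset" for l
    by (rule Gamma_in_Mset[OF assms(1-5) that])
  fix ls l assume "(\<forall>n. ls n \<in> Mset) \<and> l \<in> Mset \<and> Mconv ls l"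
  then have ls: "\<And>n. ls n \<in> Mset" and l: "l \<in> Mset" and conv: "Mconv ls l" by auto
  show "Mconv (\<lambda>n. Gamma P X0 Z \<alpha> (ls n)) (Gamma P X0 Z \<alpha> l)"
    unfolding Mconv_def
  proof (intro allI impI)
    fix x :: ereal assume "0 \<le> x" and cont: "isCont (Gamma P X0 Z \<alpha> l) x"
    then consider t where "x = ereal t" "0 \<le> t" | "x = \<infinity>" by (cases x) auto
    then show "(\<lambda>n. Gamma P X0 Z \<alpha> (ls n) x) \<longlonglongrightarrow> Gamma P X0 Z \<alpha> l x"
    proof cases
      case 1
      then show ?thesis
        using Gamma_tendsto_at_isCont[OF assms(1-5,8) l ls conv] cont by simp
    next
      case 2
      then show ?thesis using MsetD(5)[OF Gamma_in_Mset[OF assms(1-5)]] ls l by simp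
    qed
  qed
qed

end
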